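(* For $N\ge3$, inside $O_N^+$: $$O_N\cap\bar O_N=H_N,\quad O_N\cap\bar O_N^*=H_N,\quad O_N^*\cap\bar O_N=H_N,\quad O_N^*\cap\bar O_N^*=H_N^*.$$ For $N=2$: $O_2\cap\bar O_2=H_2$, $O_2\cap\bar O_2^*=O_2$, $O_2^*\cap\bar O_2=\bar O_2$, $O_2^*\cap\bar O_2^*=O_2^+$.
   Context: $C(O_N^+)$ is the universal $C^*$-algebra generated by self-adjoint $u_{ij}$ ($1\le i,j\le N$) with $u=(u_{ij})$ orthogonal, a compact quantum group with $\Delta(u_{ij})=\sum_ku_{ik}\otimes u_{kj}$. Closed quantum subgroups are defined by imposing relations on the $u_{ij}$; the intersection of two is obtained by imposing both sets of relations. With $a,b,c$ ranging over the entries $u_{ij}$: $O_N$: all entries commute (orthogonal group); $H_N\subset O_N$: signed permutation matrices; $O_N^*$: $abc=cba$ for all $a,b,c$; $\bar O_N$: $ab=-ba$ if $a\ne b$ are on the same row or same column, $ab=ba$ otherwise; $\bar O_N^*$: $abc=-cba$ if $(r\le2,s=3)$ or $(r=3,s\le2)$, and $abc=cba$ if $(r\le2,s\le2)$ or $r=s=3$, where $r$ and $s$ are the numbers of distinct rows and of distinct columns of $u$ containing $a,b,c$; $H_N^+$: $u_{ij}u_{ik}=0=u_{ji}u_{ki}$ for $j\ne k$; $H_N^*=H_N^+\cap O_N^*$. *)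

theory Defs
  imports "HOL-Analysis.Analysis"
begin

text \<open>Unital complex C*-algebras, encoded as unital real Banach algebras with an
  involution satisfying the C*-identity, together with a central element J playing
  the role of the scalar i (J*J = -1, adj J = -J, J isometric).  Complex scalar
  multiplication is then (a + b i) x = a x + b (J x).\<close>

class cstar_algebra = real_normed_algebra_1 + banach +
  fixes adj :: "'a \<Rightarrow> 'a"
    and J :: 'a
  assumes adj_adj: "adj (adj x) = x"
    and adj_add: "adj (x + y) = adj x + adj y"
    and adj_mult: "adj (x * y) = adj y * adj x"
    and adj_scaleR: "adj (scaleR r x) = scaleR r (adj x)"
    and cstar_identity: "norm (adj x * x) = (norm x)\<^sup>2"
    and J_central: "J * x = x * J"
    and J_square: "J * J = - 1"
    and adj_J: "adj J = - J"
    and norm_J_mult: "norm (J * x) = norm x"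

text \<open>A family u i j (i, j < N) of elements of a C*-algebra A is a representation of the
  defining relations of C(O_N^+): self-adjoint entries and u orthogonal.
  Indices are 0-based: {..<N}.\<close>

definition is_orth :: "nat \<Rightarrow> (nat \<Rightarrow> nat \<Rightarrow> 'a::cstar_algebra) \<Rightarrow> bool" where
  "is_orth N u \<longleftrightarrow>
     (\<forall>i<N. \<forall>j<N. adj (u i j) = u i j) \<and>
     (\<forall>i<N. \<forall>k<N. (\<Sum>j<N. u i j * u k j) = (if i = k then 1 else 0)) \<and>
     (\<forall>i<N. \<forall>k<N. (\<Sum>j<N. u j i * u j k) = (if i = k then 1 else 0))"

definition rel_O :: "nat \<Rightarrow> (nat \<Rightarrow> nat \<Rightarrow> 'a::cstar_algebra) \<Rightarrow> bool" where
  "rel_O N u \<longleftrightarrow> (\<forall>i<N. \<forall>j<N. \<forall>k<N. \<forall>l<N. u i j * u k l = u k l * u i j)"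

definition rel_Ostar :: "nat \<Rightarrow> (nat \<Rightarrow> nat \<Rightarrow> 'a::cstar_algebra) \<Rightarrow> bool" where
  "rel_Ostar N u \<longleftrightarrow>
     (\<forall>i1<N. \<forall>j1<N. \<forall>i2<N. \<forall>j2<N. \<forall>i3<N. \<forall>j3<N.
        u i1 j1 * u i2 j2 * u i3 j3 = u i3 j3 * u i2 j2 * u i1 j1)"

definition rel_Obar :: "nat \<Rightarrow> (nat \<Rightarrow> nat \<Rightarrow> 'a::cstar_algebra) \<Rightarrow> bool" where
  "rel_Obar N u \<longleftrightarrow> (\<forall>i<N. \<forall>j<N. \<forall>k<N. \<forall>l<N.
      (if (i, j) \<noteq> (k, l) \<and> (i = k \<or> j = l)
       then u i j * u k l = - (u k l * u i j)
       else u i j * u k l = u k l * u i j))"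

definition rel_Obarstar :: "nat \<Rightarrow> (nat \<Rightarrow> nat \<Rightarrow> 'a::cstar_algebra) \<Rightarrow> bool" where
  "rel_Obarstar N u \<longleftrightarrow>
     (\<forall>i1<N. \<forall>j1<N. \<forall>i2<N. \<forall>j2<N. \<forall>i3<N. \<forall>j3<N.
        (let r = card {i1, i2, i3}; s = card {j1, j2, j3} in
          (if (r \<le> 2 \<and> s = 3) \<or> (r = 3 \<and> s \<le> 2)
           then u i1 j1 * u i2 j2 * u i3 j3 = - (u i3 j3 * u i2 j2 * u i1 j1)
           else u i1 j1 * u i2 j2 * u i3 j3 = u i3 j3 * u i2 j2 * u i1 j1)))"

definition rel_Hplus :: "nat \<Rightarrow> (nat \<Rightarrow> nat \<Rightarrow> 'a::cstar_algebra) \<Rightarrow> bool" where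
  "rel_Hplus N u \<longleftrightarrow> (\<forall>i<N. \<forall>j<N. \<forall>k<N. j \<noteq> k \<longrightarrow>
      u i j * u i k = 0 \<and> u j i * u k i = 0)"

text \<open>H_N (signed permutation matrices) as a closed subgroup of O_N: commutative
  entries and at most one nonzero entry in each row/column, i.e. H_N = O_N \<inter> H_N^+
  (the zero set of these relations inside O_N is exactly the signed permutation matrices).\<close>
definition rel_H :: "nat \<Rightarrow> (nat \<Rightarrow> nat \<Rightarrow> 'a::cstar_algebra) \<Rightarrow> bool" where
  "rel_H N u \<longleftrightarrow> rel_O N u \<and> rel_Hplus N u"

definition rel_Hstar :: "nat \<Rightarrow> (nat \<Rightarrow> nat \<Rightarrow> 'a::cstar_algebra) \<Rightarrow> bool" where
  "rel_Hstar N u \<longleftrightarrow> rel_Hplus N u \<and> rel_Ostar N u"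

end

theory Submission
  imports Defs
begin

text \<open>The relations of O_N^* say abc = cba for entries a, b, c of u. Where those of bar O_N^*
  (or the pairwise sign rules of bar O_N) give abc = -cba instead, both together force abc = 0.
  For N \<ge> 3, two entries u_ij, u_ik (j \<noteq> k) of a row and any entry u_pm of a third column m
  form such a triple; multiplying u_ij u_ik u_pm = 0 by u_pm and summing over p leaves
  u_ij u_ik = 0, as column m is a unit vector. This gives the H_N^+ relations for rows, and
  transposing u gives them for columns. Conversely the H_N^+ relations make every triple with
  sign -1 vanish, using u_ij = u_ij^3 when the repeated row is the outer one.
  For N = 2 orthogonality alone gives half-commutation: any two of a + d, a - d, b + c, b - c
  commute or anticommute, with an even number of anticommuting pairs in every triple.\<close>

lemma zero_if_eq_and_eq_neg:
  fixes x :: "'a::real_vector"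
  assumes "x = y" and "x = - y"
  shows "x = 0"
proof -
  have "2 *\<^sub>R x = 0" using assms by (metis add.right_inverse scaleR_2)
  then show ?thesis by simp
qed

lemma reverse3_anticommuting:
  fixes a b c :: "'a::ring"
  assumes "b * a = - (a * b)" and "c * a = - (a * c)" and "c * b = - (b * c)"
  shows "c * b * a = - (a * b * c)"
proof -
  have "c * b * a = - (b * (c * a))" using assms(3) by (simp add: mult.assoc)
  also have "\<dots> = b * a * c" using assms(2) by (simp add: mult.assoc)
  also have "\<dots> = - (a * b * c)" using assms(1) by simp
  finally show ?thesis .
qed

lemma reverse3_anticommuting_pair:
  fixes a b c :: "'a::ring"
  assumes "b * a = - (a * b)" and "c * a = a * c" and "c * b = b * c"
  shows "c * b * a = - (a * b * c)"
proof -
  have "c * b * a = b * (c * a)" using assms(3) by (simp add: mult.assoc)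
  also have "\<dots> = b * a * c" using assms(2) by (simp add: mult.assoc)
  also have "\<dots> = - (a * b * c)" using assms(1) by simp
  finally show ?thesis .
qed

lemma reversible_triple_zero_if_cube:
  fixes a b c :: "'a::ring"
  assumes "a = a * a * a" and "a * c = 0" and "a * b * c = c * b * a"
  shows "a * b * c = 0"
proof -
  have "a * b * c = a * a * (a * b * c)" by (subst assms(1)) (simp add: mult.assoc)
  also have "\<dots> = a * (a * c) * (b * a)" using assms(3) by (simp add: mult.assoc)
  also have "\<dots> = 0" using assms(2) by simp
  finally show ?thesis .
qed

subsection \<open>Half-commutation of orthogonal 2 \<times> 2 matrices\<close>

definition triple_defect :: "'a::ring \<Rightarrow> 'a \<Rightarrow> 'a \<Rightarrow> 'a" where
  "triple_defect p q r = p * q * r - r * q * p"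

lemma triple_defect_add:
  "triple_defect (p + p') q r = triple_defect p q r + triple_defect p' q r"
  "triple_defect p (q + q') r = triple_defect p q r + triple_defect p q' r"
  "triple_defect p q (r + r') = triple_defect p q r + triple_defect p q r'"
  by (simp_all add: triple_defect_def algebra_simps)

lemma triple_defect_diff:
  "triple_defect (p - p') q r = triple_defect p q r - triple_defect p' q r"
  "triple_defect p (q - q') r = triple_defect p q r - triple_defect p q' r"
  "triple_defect p q (r - r') = triple_defect p q r - triple_defect p q r'"
  by (simp_all add: triple_defect_def algebra_simps)

lemma triple_defect_scaleR:
  fixes p q r :: "'a::real_algebra_1"
  shows "triple_defect (s *\<^sub>R p) (t *\<^sub>R q) (v *\<^sub>R r) = (s * t * v) *\<^sub>R triple_defect p q r"
  by (simp add: triple_defect_def scaleR_right_diff_distrib mult_ac)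

text \<open>The anticommuting pairs form the 4-cycle x, y, w, z, so every triple from {x, y, z, w}
  contains an even number of them.\<close>

lemma triple_defect_anticommuting_square:
  fixes x y z w :: "'a::ring"
  assumes "y * x = - (x * y)" and "z * x = - (x * z)" and "w * x = x * w"
    and "z * y = y * z" and "w * y = - (y * w)" and "w * z = - (z * w)"
  shows "\<forall>p\<in>{x, y, z, w}. \<forall>q\<in>{x, y, z, w}. \<forall>r\<in>{x, y, z, w}. triple_defect p q r = 0"
proof -
  have "\<And>t. y * (x * t) = - (x * (y * t))" "\<And>t. z * (x * t) = - (x * (z * t))"
    "\<And>t. w * (x * t) = x * (w * t)" "\<And>t. z * (y * t) = y * (z * t)"
    "\<And>t. w * (y * t) = - (y * (w * t))" "\<And>t. w * (z * t) = - (z * (w * t))"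
    using assms by (metis mult.assoc mult_minus_left)+
  then show ?thesis by (simp add: assms triple_defect_def mult.assoc)
qed

lemma orthogonal_2x2_half_commute:
  fixes a b c d :: "'a::real_algebra_1"
  assumes sq: "a * a + b * b = 1" "a * a + c * c = 1" "b * b + d * d = 1"
    and orth: "a * c + b * d = 0" "c * a + d * b = 0" "a * b + c * d = 0" "b * a + d * c = 0"
    and "p \<in> {a, b, c, d}" "q \<in> {a, b, c, d}" "r \<in> {a, b, c, d}"
  shows "p * q * r = r * q * p"
proof -
  define x y z w where "x = a + d" and "y = a - d" and "z = b + c" and "w = b - c"
  have "d * d = a * a" and "c * c = b * b" using sq by (metis add_left_cancel add.commute)+
  then have "x * y + y * x = 0" and "z * w + w * z = 0"
    unfolding x_def y_def z_def w_def by (simp_all add: algebra_simps)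
  moreover have "x * z + z * x = (a * b + c * d) + (a * c + b * d) + (c * a + d * b) + (b * a + d * c)"
    and "y * w + w * y = (a * b + c * d) + (b * a + d * c) - (a * c + b * d) - (c * a + d * b)"
    and "x * w - w * x = (a * b + c * d) - (b * a + d * c) + (c * a + d * b) - (a * c + b * d)"
    and "y * z - z * y = (a * b + c * d) - (b * a + d * c) + (a * c + b * d) - (c * a + d * b)"
    unfolding x_def y_def z_def w_def by (simp_all add: algebra_simps)
  ultimately have "y * x = - (x * y)" "z * x = - (x * z)" "w * x = x * w"
    "z * y = y * z" "w * y = - (y * w)" "w * z = - (z * w)"
    using orth by (simp_all add: add_eq_0_iff)
  note basis = triple_defect_anticommuting_square[OF this, rule_format]
  have "\<forall>p\<in>{x + y, x - y, z + w, z - w}. \<forall>q\<in>{x + y, x - y, z + w, z - w}.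
      \<forall>r\<in>{x + y, x - y, z + w, z - w}. triple_defect p q r = 0"
    by (simp add: triple_defect_add triple_defect_diff basis)
  moreover have "2 *\<^sub>R v \<in> {x + y, x - y, z + w, z - w}" if "v \<in> {a, b, c, d}" for v
    using that unfolding x_def y_def z_def w_def by (auto simp: scaleR_2)
  ultimately have "triple_defect (2 *\<^sub>R p) (2 *\<^sub>R q) (2 *\<^sub>R r) = 0"
    using assms(8-10) by blast
  then show ?thesis by (simp add: triple_defect_scaleR triple_defect_def)
qed

lemma is_orth_2_rel_Ostar:
  assumes "is_orth 2 u"
  shows "rel_Ostar 2 u"
proof -
  have row: "(\<Sum>j<2. u i j * u k j) = (if i = k then 1 else 0)"
    and col: "(\<Sum>j<2. u j i * u j k) = (if i = k then 1 else 0)" if "i < 2" "k < 2" for i k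
    using assms that unfolding is_orth_def by blast+
  have entries: "u i j \<in> {u 0 0, u 0 1, u 1 0, u 1 1}" if "i < 2" "j < 2" for i j
    using that by (auto simp: less_2_cases_iff)
  show ?thesis
    unfolding rel_Ostar_def
    using orthogonal_2x2_half_commute[of "u 0 0" "u 0 1" "u 1 0" "u 1 1"] entries
      row[of 0 0] row[of 0 1] row[of 1 0] col[of 0 0] col[of 1 1] col[of 0 1] col[of 1 0]
    by (simp add: numeral_2_eq_2)
qed

lemma rel_OD:
  "rel_O N u \<Longrightarrow> i < N \<Longrightarrow> j < N \<Longrightarrow> k < N \<Longrightarrow> l < N \<Longrightarrow> u i j * u k l = u k l * u i j"
  unfolding rel_O_def by blast

lemma rel_OstarD:
  "rel_Ostar N u \<Longrightarrow> i1 < N \<Longrightarrow> j1 < N \<Longrightarrow> i2 < N \<Longrightarrow> j2 < N \<Longrightarrow> i3 < N \<Longrightarrow> j3 < N \<Longrightarrow>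
    u i1 j1 * u i2 j2 * u i3 j3 = u i3 j3 * u i2 j2 * u i1 j1"
  unfolding rel_Ostar_def by blast

lemma rel_OstarI:
  assumes "\<And>i1 j1 i2 j2 i3 j3. i1 < N \<Longrightarrow> j1 < N \<Longrightarrow> i2 < N \<Longrightarrow> j2 < N \<Longrightarrow> i3 < N \<Longrightarrow> j3 < N \<Longrightarrow>
    u i1 j1 * u i2 j2 * u i3 j3 = u i3 j3 * u i2 j2 * u i1 j1"
  shows "rel_Ostar N u"
  unfolding rel_Ostar_def using assms by simp

lemma rel_Ostar_if_rel_O:
  assumes "rel_O N u"
  shows "rel_Ostar N u"
proof (rule rel_OstarI)
  fix i1 j1 i2 j2 i3 j3 assume idx: "i1 < N" "j1 < N" "i2 < N" "j2 < N" "i3 < N" "j3 < N"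
  note comm = rel_OD[OF assms]
  have "u i3 j3 * u i2 j2 * u i1 j1 = u i2 j2 * (u i1 j1 * u i3 j3)"
    using comm idx by (metis mult.assoc)
  also have "\<dots> = u i1 j1 * u i2 j2 * u i3 j3"
    using comm idx by (metis mult.assoc)
  finally show "u i1 j1 * u i2 j2 * u i3 j3 = u i3 j3 * u i2 j2 * u i1 j1" ..
qed

lemma rel_Obar_anticommute:
  "rel_Obar N u \<Longrightarrow> i < N \<Longrightarrow> j < N \<Longrightarrow> k < N \<Longrightarrow> l < N \<Longrightarrow> (i, j) \<noteq> (k, l) \<Longrightarrow> i = k \<or> j = l \<Longrightarrow>
    u i j * u k l = - (u k l * u i j)"
  unfolding rel_Obar_def by (metis (no_types, lifting))

lemma rel_Obar_commute:
  "rel_Obar N u \<Longrightarrow> i < N \<Longrightarrow> j < N \<Longrightarrow> k < N \<Longrightarrow> l < N \<Longrightarrow> i \<noteq> k \<Longrightarrow> j \<noteq> l \<Longrightarrow>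
    u i j * u k l = u k l * u i j"
  unfolding rel_Obar_def by (metis (no_types, lifting) prod.inject)

lemma rel_ObarI:
  assumes "\<And>i j k l. i < N \<Longrightarrow> j < N \<Longrightarrow> k < N \<Longrightarrow> l < N \<Longrightarrow> (i, j) \<noteq> (k, l) \<Longrightarrow> i = k \<or> j = l \<Longrightarrow>
      u i j * u k l = - (u k l * u i j)"
    and "\<And>i j k l. i < N \<Longrightarrow> j < N \<Longrightarrow> k < N \<Longrightarrow> l < N \<Longrightarrow> i \<noteq> k \<Longrightarrow> j \<noteq> l \<Longrightarrow>
      u i j * u k l = u k l * u i j"
  shows "rel_Obar N u"
  unfolding rel_Obar_def using assms by auto

lemma card_triple_eq_3_iff: "card {a, b, c} = 3 \<longleftrightarrow> a \<noteq> b \<and> a \<noteq> c \<and> b \<noteq> c"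
  by (auto simp: card_insert_if)

lemma card_triple_le_2_iff: "card {a, b, c} \<le> 2 \<longleftrightarrow> a = b \<or> a = c \<or> b = c"
  by (auto simp: card_insert_if)

definition odd_triple :: "nat \<Rightarrow> nat \<Rightarrow> nat \<Rightarrow> nat \<Rightarrow> nat \<Rightarrow> nat \<Rightarrow> bool" where
  "odd_triple i1 j1 i2 j2 i3 j3 \<longleftrightarrow>
     (card {i1, i2, i3} \<le> 2 \<and> card {j1, j2, j3} = 3) \<or> (card {i1, i2, i3} = 3 \<and> card {j1, j2, j3} \<le> 2)"

lemma rel_ObarstarD:
  "rel_Obarstar N u \<Longrightarrow> i1 < N \<Longrightarrow> j1 < N \<Longrightarrow> i2 < N \<Longrightarrow> j2 < N \<Longrightarrow> i3 < N \<Longrightarrow> j3 < N \<Longrightarrow>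
    if odd_triple i1 j1 i2 j2 i3 j3
    then u i1 j1 * u i2 j2 * u i3 j3 = - (u i3 j3 * u i2 j2 * u i1 j1)
    else u i1 j1 * u i2 j2 * u i3 j3 = u i3 j3 * u i2 j2 * u i1 j1"
  unfolding rel_Obarstar_def odd_triple_def Let_def by blast

lemma rel_ObarstarI:
  assumes "\<And>i1 j1 i2 j2 i3 j3. i1 < N \<Longrightarrow> j1 < N \<Longrightarrow> i2 < N \<Longrightarrow> j2 < N \<Longrightarrow> i3 < N \<Longrightarrow> j3 < N \<Longrightarrow>
    if odd_triple i1 j1 i2 j2 i3 j3
    then u i1 j1 * u i2 j2 * u i3 j3 = - (u i3 j3 * u i2 j2 * u i1 j1)
    else u i1 j1 * u i2 j2 * u i3 j3 = u i3 j3 * u i2 j2 * u i1 j1"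
  shows "rel_Obarstar N u"
  using assms unfolding rel_Obarstar_def odd_triple_def Let_def by blast

lemma odd_triple_transpose: "odd_triple j1 i1 j2 i2 j3 i3 \<longleftrightarrow> odd_triple i1 j1 i2 j2 i3 j3"
  unfolding odd_triple_def by auto

lemma odd_triple_cases:
  assumes "odd_triple i1 j1 i2 j2 i3 j3"
  obtains "card {i1, i2, i3} \<le> 2" "card {j1, j2, j3} = 3"
        | "card {i1, i2, i3} = 3" "card {j1, j2, j3} \<le> 2"
  using assms unfolding odd_triple_def by blast

lemma rel_Ostar_2_rel_Obarstar:
  assumes "rel_Ostar 2 u"
  shows "rel_Obarstar 2 u"
proof -
  have "card {i1, i2, i3} \<le> 2" if "i1 < 2" "i2 < 2" "i3 < 2" for i1 i2 i3 :: nat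
    using card_mono[of "{0, 1}" "{i1, i2, i3}"] that by (auto simp: less_2_cases_iff)
  then have "\<not> odd_triple i1 j1 i2 j2 i3 j3"
    if "i1 < 2" "j1 < 2" "i2 < 2" "j2 < 2" "i3 < 2" "j3 < 2" for i1 j1 i2 j2 i3 j3
    using that unfolding odd_triple_def by fastforce
  then show ?thesis
    using rel_OstarD[OF assms] by (intro rel_ObarstarI) simp
qed

lemma is_orth_transpose: "is_orth N u \<Longrightarrow> is_orth N (\<lambda>i j. u j i)"
  unfolding is_orth_def by blast

lemma rel_Ostar_transpose: "rel_Ostar N u \<Longrightarrow> rel_Ostar N (\<lambda>i j. u j i)"
  by (rule rel_OstarI) (simp add: rel_OstarD)

lemma rel_Obar_transpose: "rel_Obar N u \<Longrightarrow> rel_Obar N (\<lambda>i j. u j i)"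
  by (rule rel_ObarI) (auto intro: rel_Obar_anticommute rel_Obar_commute)

lemma rel_Obarstar_transpose:
  assumes "rel_Obarstar N u"
  shows "rel_Obarstar N (\<lambda>i j. u j i)"
  by (rule rel_ObarstarI) (metis rel_ObarstarD[OF assms] odd_triple_transpose)

subsection \<open>The relations of H_N^+\<close>

definition rel_Hplus_rows :: "nat \<Rightarrow> (nat \<Rightarrow> nat \<Rightarrow> 'a::cstar_algebra) \<Rightarrow> bool" where
  "rel_Hplus_rows N u \<longleftrightarrow> (\<forall>i<N. \<forall>j<N. \<forall>k<N. j \<noteq> k \<longrightarrow> u i j * u i k = 0)"

lemma rel_Hplus_iff_rows:
  "rel_Hplus N u \<longleftrightarrow> rel_Hplus_rows N u \<and> rel_Hplus_rows N (\<lambda>i j. u j i)"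
  unfolding rel_Hplus_def rel_Hplus_rows_def by blast

lemma rel_Hplus_rowsD:
  "rel_Hplus_rows N u \<Longrightarrow> i < N \<Longrightarrow> j < N \<Longrightarrow> k < N \<Longrightarrow> j \<noteq> k \<Longrightarrow> u i j * u i k = 0"
  unfolding rel_Hplus_rows_def by blast

lemma rel_Hplus_row_zero:
  "rel_Hplus N u \<Longrightarrow> i < N \<Longrightarrow> j < N \<Longrightarrow> k < N \<Longrightarrow> j \<noteq> k \<Longrightarrow> u i j * u i k = 0"
  unfolding rel_Hplus_def by blast

lemma rel_Hplus_col_zero:
  "rel_Hplus N u \<Longrightarrow> i < N \<Longrightarrow> j < N \<Longrightarrow> k < N \<Longrightarrow> j \<noteq> k \<Longrightarrow> u j i * u k i = 0"
  unfolding rel_Hplus_def by blast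

lemma is_orth_row_sum_squares: "is_orth N u \<Longrightarrow> i < N \<Longrightarrow> (\<Sum>j<N. u i j * u i j) = 1"
  unfolding is_orth_def by simp

lemma is_orth_col_sum_squares: "is_orth N u \<Longrightarrow> j < N \<Longrightarrow> (\<Sum>i<N. u i j * u i j) = 1"
  unfolding is_orth_def by simp

lemma is_orth_eq_zero_if_mult_col_zero:
  assumes "is_orth N u" and "m < N" and "\<And>p. p < N \<Longrightarrow> x * u p m = 0"
  shows "x = 0"
proof -
  have "x = x * (\<Sum>p<N. u p m * u p m)" using is_orth_col_sum_squares[OF assms(1,2)] by simp
  also have "\<dots> = (\<Sum>p<N. x * u p m * u p m)" by (simp add: sum_distrib_left mult.assoc)
  also have "\<dots> = 0" using assms(3) by simp
  finally show ?thesis .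
qed

lemma rel_Hplus_rows_cube:
  assumes "is_orth N u" and "rel_Hplus_rows N u" and "i < N" and "j < N"
  shows "u i j = u i j * u i j * u i j"
proof -
  have "u i j = u i j * (\<Sum>q<N. u i q * u i q)" using is_orth_row_sum_squares[OF assms(1,3)] by simp
  also have "\<dots> = (\<Sum>q<N. u i j * u i q * u i q)" by (simp add: sum_distrib_left mult.assoc)
  also have "\<dots> = (\<Sum>q<N. if q = j then u i j * u i j * u i j else 0)"
    using rel_Hplus_rowsD[OF assms(2,3)] assms(4) by (intro sum.cong) auto
  also have "\<dots> = u i j * u i j * u i j" using assms(4) by simp
  finally show ?thesis .
qed

lemma ex_less_neq2:
  assumes "(3::nat) \<le> N"
  shows "\<exists>m<N. m \<noteq> j \<and> m \<noteq> k"
proof -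
  consider "j \<noteq> 0 \<and> k \<noteq> 0" | "j \<noteq> 1 \<and> k \<noteq> 1" | "j \<noteq> 2 \<and> k \<noteq> 2" by linarith
  then show ?thesis using assms by cases (auto intro: exI[of _ 0] exI[of _ 1] exI[of _ 2])
qed

lemma rel_Hplus_rows_if_triples_vanish:
  assumes "is_orth N u" and "3 \<le> N"
    and "\<And>i j k p m. i < N \<Longrightarrow> j < N \<Longrightarrow> k < N \<Longrightarrow> p < N \<Longrightarrow> m < N \<Longrightarrow>
           j \<noteq> k \<Longrightarrow> m \<noteq> j \<Longrightarrow> m \<noteq> k \<Longrightarrow> u i j * u i k * u p m = 0"
  shows "rel_Hplus_rows N u"
  unfolding rel_Hplus_rows_def
proof (intro allI impI)
  fix i j k assume "i < N" "j < N" "k < N" "j \<noteq> k"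
  obtain m where "m < N" "m \<noteq> j" "m \<noteq> k" using ex_less_neq2[OF assms(2)] by blast
  show "u i j * u i k = 0"
  proof (rule is_orth_eq_zero_if_mult_col_zero[OF assms(1) \<open>m < N\<close>])
    fix p assume "p < N"
    from assms(3)[OF \<open>i < N\<close> \<open>j < N\<close> \<open>k < N\<close> this \<open>m < N\<close> \<open>j \<noteq> k\<close> \<open>m \<noteq> j\<close> \<open>m \<noteq> k\<close>]
    show "u i j * u i k * u p m = 0" .
  qed
qed

lemma rel_Hplus_if_Ostar_Obarstar:
  assumes "is_orth N u" and "3 \<le> N" and "rel_Ostar N u" and "rel_Obarstar N u"
  shows "rel_Hplus N u"
proof -
  have rows: "rel_Hplus_rows N v"
    if "is_orth N v" "rel_Ostar N v" "rel_Obarstar N v" for v :: "nat \<Rightarrow> nat \<Rightarrow> 'a"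
  proof (rule rel_Hplus_rows_if_triples_vanish[OF that(1) assms(2)])
    fix i j k p m assume idx: "i < N" "j < N" "k < N" "p < N" "m < N"
      and "j \<noteq> k" "m \<noteq> j" "m \<noteq> k"
    then have "odd_triple i j i k p m" unfolding odd_triple_def by (auto simp: card_insert_if)
    then have "v i j * v i k * v p m = - (v p m * v i k * v i j)"
      using rel_ObarstarD[OF that(3) idx(1,2) idx(1,3) idx(4,5)] by simp
    with rel_OstarD[OF that(2) idx(1,2) idx(1,3) idx(4,5)] show "v i j * v i k * v p m = 0"
      by (rule zero_if_eq_and_eq_neg)
  qed
  show ?thesis
    unfolding rel_Hplus_iff_rows
    using rows[OF assms(1,3,4)]
      rows[OF is_orth_transpose[OF assms(1)] rel_Ostar_transpose[OF assms(3)]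
        rel_Obarstar_transpose[OF assms(4)]]
    by blast
qed

lemma rel_Hplus_if_Ostar_Obar:
  assumes "is_orth N u" and "3 \<le> N" and "rel_Ostar N u" and "rel_Obar N u"
  shows "rel_Hplus N u"
proof -
  have rows: "rel_Hplus_rows N v"
    if "is_orth N v" "rel_Ostar N v" "rel_Obar N v" for v :: "nat \<Rightarrow> nat \<Rightarrow> 'a"
  proof (rule rel_Hplus_rows_if_triples_vanish[OF that(1) assms(2)])
    fix i j k p m assume idx: "i < N" "j < N" "k < N" "p < N" "m < N"
      and "j \<noteq> k" "m \<noteq> j" "m \<noteq> k"
    have ba: "v i k * v i j = - (v i j * v i k)"
      using rel_Obar_anticommute[OF that(3) idx(1,3,1,2)] \<open>j \<noteq> k\<close> by simp
    have "v p m * v i k * v i j = - (v i j * v i k * v p m)"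
    proof (cases "p = i")
      case True
      then show ?thesis
        using reverse3_anticommuting[OF ba] rel_Obar_anticommute[OF that(3) idx(4,5,1)] idx(2,3)
          \<open>m \<noteq> j\<close> \<open>m \<noteq> k\<close> by simp
    next
      case False
      then show ?thesis
        using reverse3_anticommuting_pair[OF ba] rel_Obar_commute[OF that(3) idx(4,5,1)] idx(2,3)
          \<open>m \<noteq> j\<close> \<open>m \<noteq> k\<close> by simp
    qed
    then have "v i j * v i k * v p m = - (v p m * v i k * v i j)" by simp
    with rel_OstarD[OF that(2) idx(1,2) idx(1,3) idx(4,5)] show "v i j * v i k * v p m = 0"
      by (rule zero_if_eq_and_eq_neg)
  qed
  show ?thesis
    unfolding rel_Hplus_iff_rows
    using rows[OF assms(1,3,4)]
      rows[OF is_orth_transpose[OF assms(1)] rel_Ostar_transpose[OF assms(3)]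
        rel_Obar_transpose[OF assms(4)]]
    by blast
qed

lemma rel_O_if_Hplus_Obar:
  assumes "rel_Hplus N u" and "rel_Obar N u"
  shows "rel_O N u"
  unfolding rel_O_def
proof (intro allI impI)
  fix i j k l assume idx: "i < N" "j < N" "k < N" "l < N"
  consider "i = k" | "j = l" | "i \<noteq> k" "j \<noteq> l" by blast
  then show "u i j * u k l = u k l * u i j"
  proof cases
    case 1
    then show ?thesis
      using rel_Hplus_row_zero[OF assms(1), of i j l] rel_Hplus_row_zero[OF assms(1), of i l j] idx
      by (cases "j = l") auto
  next
    case 2
    then show ?thesis
      using rel_Hplus_col_zero[OF assms(1), of j i k] rel_Hplus_col_zero[OF assms(1), of j k i] idx
      by (cases "i = k") auto
  qed (use rel_Obar_commute[OF assms(2) idx] in simp)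
qed

lemma rel_O_rel_Obar_iff_rel_H: "rel_O N u \<and> rel_Obar N u \<longleftrightarrow> rel_H N u"
proof
  assume "rel_O N u \<and> rel_Obar N u"
  then have "rel_Hplus N u"
    unfolding rel_Hplus_def
    using rel_OD[of N u] rel_Obar_anticommute[of N u] by (auto intro: zero_if_eq_and_eq_neg)
  with \<open>rel_O N u \<and> rel_Obar N u\<close> show "rel_H N u" unfolding rel_H_def by blast
next
  assume "rel_H N u"
  then have O: "rel_O N u" and Hp: "rel_Hplus N u" unfolding rel_H_def by auto
  have "rel_Obar N u"
  proof (rule rel_ObarI)
    fix i j k l assume idx: "i < N" "j < N" "k < N" "l < N"
      and "(i, j) \<noteq> (k, l)" and "i = k \<or> j = l"
    then show "u i j * u k l = - (u k l * u i j)"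
      using rel_Hplus_row_zero[OF Hp, of i j l] rel_Hplus_row_zero[OF Hp, of i l j]
        rel_Hplus_col_zero[OF Hp, of j i k] rel_Hplus_col_zero[OF Hp, of j k i]
      by auto
  qed (rule rel_OD[OF O])
  with O show "rel_O N u \<and> rel_Obar N u" ..
qed

lemma triple_zero_if_odd_rows:
  assumes "is_orth N u" and "rel_Hplus_rows N u" and "rel_Ostar N u"
    and idx: "i1 < N" "j1 < N" "i2 < N" "j2 < N" "i3 < N" "j3 < N"
    and "card {i1, i2, i3} \<le> 2" and "card {j1, j2, j3} = 3"
  shows "u i1 j1 * u i2 j2 * u i3 j3 = 0"
proof -
  have "j1 \<noteq> j2" "j1 \<noteq> j3" "j2 \<noteq> j3" using assms(11) unfolding card_triple_eq_3_iff by auto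
  consider "i1 = i2" | "i1 = i3" | "i2 = i3" using assms(10) unfolding card_triple_le_2_iff by blast
  then show ?thesis
  proof cases
    case 1
    then show ?thesis using rel_Hplus_rowsD[OF assms(2) idx(1,2,4)] \<open>j1 \<noteq> j2\<close> by simp
  next
    case 2
    then show ?thesis
      using reversible_triple_zero_if_cube[OF rel_Hplus_rows_cube[OF assms(1,2) idx(1,2)] _
          rel_OstarD[OF assms(3) idx]]
        rel_Hplus_rowsD[OF assms(2) idx(1,2,6)] \<open>j1 \<noteq> j3\<close> by simp
  next
    case 3
    then show ?thesis
      using rel_Hplus_rowsD[OF assms(2) idx(3,4,6)] \<open>j2 \<noteq> j3\<close> by (simp add: mult.assoc)
  qed
qed

lemma rel_Obarstar_if_Hplus_Ostar:
  assumes "is_orth N u" and "rel_Hplus N u" and "rel_Ostar N u"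
  shows "rel_Obarstar N u"
proof (rule rel_ObarstarI)
  fix i1 j1 i2 j2 i3 j3 assume idx: "i1 < N" "j1 < N" "i2 < N" "j2 < N" "i3 < N" "j3 < N"
  have rows: "rel_Hplus_rows N u" and cols: "rel_Hplus_rows N (\<lambda>i j. u j i)"
    using assms(2) unfolding rel_Hplus_iff_rows by blast+
  have "u i1 j1 * u i2 j2 * u i3 j3 = 0" if "odd_triple i1 j1 i2 j2 i3 j3"
    using that
  proof (cases rule: odd_triple_cases)
    case 1
    then show ?thesis by (rule triple_zero_if_odd_rows[OF assms(1) rows assms(3) idx])
  next
    case 2
    then show ?thesis
      using triple_zero_if_odd_rows[OF is_orth_transpose[OF assms(1)] cols
          rel_Ostar_transpose[OF assms(3)] idx(2,1,4,3,6,5)]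
      by simp
  qed
  then show "if odd_triple i1 j1 i2 j2 i3 j3
    then u i1 j1 * u i2 j2 * u i3 j3 = - (u i3 j3 * u i2 j2 * u i1 j1)
    else u i1 j1 * u i2 j2 * u i3 j3 = u i3 j3 * u i2 j2 * u i1 j1"
    using rel_OstarD[OF assms(3) idx] by auto
qed

theorem proposition4p2:
  fixes N :: nat and u :: "nat \<Rightarrow> nat \<Rightarrow> 'a::cstar_algebra"
  assumes "is_orth N u"
  shows "(N \<ge> 3 \<longrightarrow>
            ((rel_O N u \<and> rel_Obar N u) \<longleftrightarrow> rel_H N u) \<and>
            ((rel_O N u \<and> rel_Obarstar N u) \<longleftrightarrow> rel_H N u) \<and>
            ((rel_Ostar N u \<and> rel_Obar N u) \<longleftrightarrow> rel_H N u) \<and>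
            ((rel_Ostar N u \<and> rel_Obarstar N u) \<longleftrightarrow> rel_Hstar N u))
       \<and> (N = 2 \<longrightarrow>
            ((rel_O N u \<and> rel_Obar N u) \<longleftrightarrow> rel_H N u) \<and>
            ((rel_O N u \<and> rel_Obarstar N u) \<longleftrightarrow> rel_O N u) \<and>
            ((rel_Ostar N u \<and> rel_Obar N u) \<longleftrightarrow> rel_Obar N u) \<and>
            ((rel_Ostar N u \<and> rel_Obarstar N u) \<longleftrightarrow> True))"
proof (intro conjI impI)
  assume N: "N \<ge> 3"
  note Hplus = rel_Hplus_if_Ostar_Obarstar[OF assms N]
    and Obarstar = rel_Obarstar_if_Hplus_Ostar[OF assms]
  show "(rel_O N u \<and> rel_Obar N u) \<longleftrightarrow> rel_H N u" by (rule rel_O_rel_Obar_iff_rel_H)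
  show "(rel_O N u \<and> rel_Obarstar N u) \<longleftrightarrow> rel_H N u"
    using Hplus Obarstar rel_Ostar_if_rel_O unfolding rel_H_def by blast
  show "(rel_Ostar N u \<and> rel_Obar N u) \<longleftrightarrow> rel_H N u"
    using rel_Hplus_if_Ostar_Obar[OF assms N] rel_O_if_Hplus_Obar rel_Ostar_if_rel_O
      rel_O_rel_Obar_iff_rel_H[of N u]
    unfolding rel_H_def by blast
  show "(rel_Ostar N u \<and> rel_Obarstar N u) \<longleftrightarrow> rel_Hstar N u"
    using Hplus Obarstar unfolding rel_Hstar_def by blast
next
  assume N: "N = 2"
  have Ostar: "rel_Ostar N u" using is_orth_2_rel_Ostar assms N by simp
  then have Obarstar: "rel_Obarstar N u" using rel_Ostar_2_rel_Obarstar N by simp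
  show "(rel_O N u \<and> rel_Obar N u) \<longleftrightarrow> rel_H N u" by (rule rel_O_rel_Obar_iff_rel_H)
  show "(rel_O N u \<and> rel_Obarstar N u) \<longleftrightarrow> rel_O N u" using Obarstar by blast
  show "(rel_Ostar N u \<and> rel_Obar N u) \<longleftrightarrow> rel_Obar N u" using Ostar by blast
  show "(rel_Ostar N u \<and> rel_Obarstar N u) \<longleftrightarrow> True" using Ostar Obarstar by blast
qed

end
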